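(* Let $G$ and $H$ be finite simple graphs, neither complete, not both equal to a disjoint union of two complete graphs, and suppose ${\rm diam}(G\diamond H)=3$. Then for vertices $(g,h),(g',h')$ of $G\diamond H$, $(g,h)(g',h')\in E((G\diamond H)_{SR})$ if and only if the (unordered) pair satisfies at least one of the following, where in (iv) and (v) either vertex may play the role of $(g,h)$: (i) $(g,h)\neq(g',h')$ and $N_{G\diamond H}[(g,h)]=N_{G\diamond H}[(g',h')]$; (ii) $d_{G\diamond H}((g,h),(g',h'))=2$ and neither $(g,h)$ nor $(g',h')$ is a boundary vertex of $G\diamond H$; (iii) $d_{G\diamond H}((g,h),(g',h'))=3$; (iv) $g$ and $g'$ are universal vertices of $G$, $d_H(h,h')=2$ and $hh'\in E(H_{SR})$; or $h$ and $h'$ are universal vertices of $H$, $d_G(g,g')=2$ and $gg'\in E(G_{SR})$; (v) $g$ is universal in $G$, $g'$ is not universal in $G$, $d_H(h,h')=2$, $d_H(h,h'')\le 2$ for every $h''\in N_H[h']$, and $h'$ belongs to no $\gamma_H$-pair; or $h$ is universal in $H$, $h'$ is not universal in $H$, $d_G(g,g')=2$, $d_G(g,g'')\le 2$ for every $g''\in N_G[g']$, and $g'$ belongs to no $\gamma_G$-pair.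
   Context: The modular product $G\diamond H$ has vertex set $V(G)\times V(H)$; distinct vertices $(g,h)$ and $(g',h')$ are adjacent iff ($g=g'$ and $hh'\in E(H)$), or ($gg'\in E(G)$ and $h=h'$), or ($gg'\in E(G)$ and $hh'\in E(H)$), or ($g\neq g'$, $h\neq h'$, $gg'\notin E(G)$ and $hh'\notin E(H)$). A vertex $v$ is universal in $X$ if $N_X[v]=V(X)$. A boundary vertex of a connected graph $X$ is a vertex $u$ for which some $v$ has $d_X(u,v)={\rm diam}(X)$. A $\gamma_G$-pair is a set $\{g,g'\}$ of two distinct vertices of $G$ such that $N_G[g]\cap N_G[g']=\emptyset$ and $N_G[g]\cup N_G[g']=V(G)$. Two distinct vertices $u,v$ of a graph $X$ lying in the same connected component are mutually maximally distant if there is no $x\in N_X(u)$ with $d_X(x,v)=d_X(u,v)+1$ and no $y\in N_X(v)$ with $d_X(y,u)=d_X(u,v)+1$; the strong resolving graph $X_{SR}$ has as edges exactly the mutually maximally distant pairs. *)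

theory Defs
  imports Main "HOL-Library.Extended_Nat"
begin

definition simple_graph :: "'a set \<Rightarrow> ('a \<Rightarrow> 'a \<Rightarrow> bool) \<Rightarrow> bool" where
  "simple_graph V E \<longleftrightarrow> finite V \<and> (\<forall>x y. E x y \<longrightarrow> x \<in> V \<and> y \<in> V)
     \<and> (\<forall>x y. E x y \<longrightarrow> E y x) \<and> (\<forall>x. \<not> E x x)"

inductive walk_len :: "'a set \<Rightarrow> ('a \<Rightarrow> 'a \<Rightarrow> bool) \<Rightarrow> nat \<Rightarrow> 'a \<Rightarrow> 'a \<Rightarrow> bool"
  for V E where
  walk0: "x \<in> V \<Longrightarrow> walk_len V E 0 x x"
| walkS: "E x y \<Longrightarrow> x \<in> V \<Longrightarrow> walk_len V E n y z \<Longrightarrow> walk_len V E (Suc n) x z"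

text \<open>Distance (infinite if not in the same component).\<close>
definition gdist :: "'a set \<Rightarrow> ('a \<Rightarrow> 'a \<Rightarrow> bool) \<Rightarrow> 'a \<Rightarrow> 'a \<Rightarrow> enat" where
  "gdist V E u v = Inf {enat n | n. walk_len V E n u v}"

definition gdiam :: "'a set \<Rightarrow> ('a \<Rightarrow> 'a \<Rightarrow> bool) \<Rightarrow> enat" where
  "gdiam V E = Sup {gdist V E u v | u v. u \<in> V \<and> v \<in> V}"

definition connected_graph :: "'a set \<Rightarrow> ('a \<Rightarrow> 'a \<Rightarrow> bool) \<Rightarrow> bool" where
  "connected_graph V E \<longleftrightarrow> (\<forall>u\<in>V. \<forall>v\<in>V. gdist V E u v < \<infinity>)"

definition closed_nbhd :: "'a set \<Rightarrow> ('a \<Rightarrow> 'a \<Rightarrow> bool) \<Rightarrow> 'a \<Rightarrow> 'a set" where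
  "closed_nbhd V E v = {u \<in> V. u = v \<or> E v u}"

definition universal :: "'a set \<Rightarrow> ('a \<Rightarrow> 'a \<Rightarrow> bool) \<Rightarrow> 'a \<Rightarrow> bool" where
  "universal V E v \<longleftrightarrow> v \<in> V \<and> closed_nbhd V E v = V"

definition boundary_vertex :: "'a set \<Rightarrow> ('a \<Rightarrow> 'a \<Rightarrow> bool) \<Rightarrow> 'a \<Rightarrow> bool" where
  "boundary_vertex V E u \<longleftrightarrow> u \<in> V \<and> (\<exists>v\<in>V. gdist V E u v = gdiam V E)"

definition gamma_pair :: "'a set \<Rightarrow> ('a \<Rightarrow> 'a \<Rightarrow> bool) \<Rightarrow> 'a \<Rightarrow> 'a \<Rightarrow> bool" where
  "gamma_pair V E g g' \<longleftrightarrow> g \<in> V \<and> g' \<in> V \<and> g \<noteq> g'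
     \<and> closed_nbhd V E g \<inter> closed_nbhd V E g' = {}
     \<and> closed_nbhd V E g \<union> closed_nbhd V E g' = V"

text \<open>Mutually maximally distant vertices = edges of the strong resolving graph.\<close>
definition mmd :: "'a set \<Rightarrow> ('a \<Rightarrow> 'a \<Rightarrow> bool) \<Rightarrow> 'a \<Rightarrow> 'a \<Rightarrow> bool" where
  "mmd V E u v \<longleftrightarrow> u \<in> V \<and> v \<in> V \<and> u \<noteq> v \<and> gdist V E u v < \<infinity>
     \<and> (\<forall>x. E u x \<longrightarrow> gdist V E x v \<noteq> gdist V E u v + 1)
     \<and> (\<forall>y. E v y \<longrightarrow> gdist V E y u \<noteq> gdist V E u v + 1)"

abbreviation SR_edge :: "'a set \<Rightarrow> ('a \<Rightarrow> 'a \<Rightarrow> bool) \<Rightarrow> 'a \<Rightarrow> 'a \<Rightarrow> bool" where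
  "SR_edge V E u v \<equiv> mmd V E u v"

definition complete_graph :: "'a set \<Rightarrow> ('a \<Rightarrow> 'a \<Rightarrow> bool) \<Rightarrow> bool" where
  "complete_graph V E \<longleftrightarrow> (\<forall>u\<in>V. \<forall>v\<in>V. u \<noteq> v \<longrightarrow> E u v)"

definition two_cliques :: "'a set \<Rightarrow> ('a \<Rightarrow> 'a \<Rightarrow> bool) \<Rightarrow> bool" where
  "two_cliques V E \<longleftrightarrow> (\<exists>A B. A \<noteq> {} \<and> B \<noteq> {} \<and> A \<inter> B = {} \<and> A \<union> B = V
     \<and> complete_graph A E \<and> complete_graph B E
     \<and> (\<forall>a\<in>A. \<forall>b\<in>B. \<not> E a b))"

definition modprod_V :: "'a set \<Rightarrow> 'b set \<Rightarrow> ('a \<times> 'b) set" where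
  "modprod_V VG VH = VG \<times> VH"

definition modprod_E :: "'a set \<Rightarrow> ('a \<Rightarrow> 'a \<Rightarrow> bool) \<Rightarrow> 'b set \<Rightarrow> ('b \<Rightarrow> 'b \<Rightarrow> bool)
    \<Rightarrow> ('a \<times> 'b) \<Rightarrow> ('a \<times> 'b) \<Rightarrow> bool" where
  "modprod_E VG EG VH EH x y \<longleftrightarrow>
     (case x of (g, h) \<Rightarrow> case y of (g', h') \<Rightarrow>
       g \<in> VG \<and> g' \<in> VG \<and> h \<in> VH \<and> h' \<in> VH \<and> (g, h) \<noteq> (g', h') \<and>
       ((g = g' \<and> EH h h') \<or> (EG g g' \<and> h = h') \<or> (EG g g' \<and> EH h h')
        \<or> (g \<noteq> g' \<and> h \<noteq> h' \<and> \<not> EG g g' \<and> \<not> EH h h')))"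

end

theory Submission
  imports Defs
begin

text \<open>Write \<open>x \<approx> y\<close> for ``\<open>x = y\<close> or \<open>x\<close>, \<open>y\<close> adjacent''. Distinct vertices \<open>(g, h)\<close>,
\<open>(c, d)\<close> of \<open>G \<diamond> H\<close> are adjacent exactly when \<open>g \<approx> c \<longleftrightarrow> h \<approx> d\<close>, so distances up to two
in the product reduce to the existence of a vertex \<open>(a, b)\<close> with \<open>g \<approx> a \<longleftrightarrow> h \<approx> b\<close> and
\<open>a \<approx> c \<longleftrightarrow> b \<approx> d\<close>. Such a vertex is missing precisely when one pair of coordinates are
closed twins and the other has disjoint closed neighbourhoods, with the twin coordinate
universal or the other pair a \<open>\<gamma>\<close>-pair; this describes the pairs at distance 3.

For a pair at distance \<open>n\<close>, being mutually maximally distant means that every closed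
neighbour of either vertex stays within distance \<open>n\<close> of the other. This is automatic at
distance \<open>3 = diam\<close>, amounts to \<open>N[u] = N[v]\<close> at distance 1, and at distance 2 it is
automatic when neither vertex is a boundary vertex. If instead \<open>(g, h)\<close> has a vertex at
distance 3, say with \<open>h\<close> far from some \<open>b\<close> in \<open>H\<close>, then applying the condition to the
neighbours \<open>(g, d)\<close> of \<open>(g', h')\<close> forces \<open>g\<close> to be universal, and applying it to the
neighbours \<open>(g', x)\<close> of \<open>(g, h)\<close> yields condition (iv) or (v).\<close>

section \<open>Distances in simple graphs\<close>

lemma walk_len_in_V:
  assumes "walk_len V E n x y" shows "x \<in> V" "y \<in> V"
  using assms by (induction rule: walk_len.induct) auto

lemma walk_len_0_iff: "walk_len V E 0 x y \<longleftrightarrow> x \<in> V \<and> x = y"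
  by (auto elim: walk_len.cases intro: walk_len.intros)

lemma walk_len_Suc_iff:
  "walk_len V E (Suc n) x z \<longleftrightarrow> x \<in> V \<and> (\<exists>y. E x y \<and> walk_len V E n y z)"
  by (auto elim: walk_len.cases intro: walk_len.intros)

lemma walk_len_snoc: "walk_len V E n x y \<Longrightarrow> E y z \<Longrightarrow> z \<in> V \<Longrightarrow> walk_len V E (Suc n) x z"
  by (induction rule: walk_len.induct) (auto intro: walk_len.intros)

lemma walk_len_rev:
  assumes "\<And>x y. E x y \<Longrightarrow> E y x"
  shows "walk_len V E n x y \<Longrightarrow> walk_len V E n y x"
  by (induction rule: walk_len.induct) (auto intro: walk_len.intros walk_len_snoc assms)

lemma gdist_le_enat_iff: "gdist V E u v \<le> enat n \<longleftrightarrow> (\<exists>m\<le>n. walk_len V E m u v)"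
proof
  assume "gdist V E u v \<le> enat n"
  then obtain x where "x \<in> {enat m | m. walk_len V E m u v}" "x < enat (Suc n)"
    unfolding gdist_def Inf_le_iff by (meson Suc_ile_eq order_refl)
  then show "\<exists>m\<le>n. walk_len V E m u v" by (auto simp: less_Suc_eq_le)
next
  assume "\<exists>m\<le>n. walk_len V E m u v"
  then obtain m where "m \<le> n" "walk_len V E m u v" by blast
  then have "gdist V E u v \<le> enat m" unfolding gdist_def by (blast intro: Inf_lower)
  with \<open>m \<le> n\<close> show "gdist V E u v \<le> enat n" by (meson enat_ord_simps(1) order_trans)
qed

lemma gdist_commute:
  assumes "simple_graph V E"
  shows "gdist V E u v = gdist V E v u"
proof -
  have "walk_len V E n u v \<longleftrightarrow> walk_len V E n v u" for n
    using walk_len_rev[of E V n] assms unfolding simple_graph_def by blast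
  then show ?thesis unfolding gdist_def by simp
qed

lemma gdist_eq_0_iff: "u \<in> V \<Longrightarrow> gdist V E u v = 0 \<longleftrightarrow> u = v"
  using gdist_le_enat_iff[of V E u v 0] by (simp add: zero_enat_def[symmetric] walk_len_0_iff)

lemma gdist_le_Suc_if_adj:
  assumes "E x u" "x \<in> V"
  shows "gdist V E x v \<le> gdist V E u v + 1"
proof (cases "gdist V E u v")
  case (enat n)
  then obtain m where "m \<le> n" "walk_len V E m u v"
    using gdist_le_enat_iff[of V E u v n] by auto
  then have "Suc m \<le> Suc n" "walk_len V E (Suc m) x v"
    using assms by (auto intro: walkS)
  then have "gdist V E x v \<le> enat (Suc n)"
    unfolding gdist_le_enat_iff by blast
  then show ?thesis using enat by (simp add: one_enat_def)
qed simp

lemma gdist_le_gdiam: "u \<in> V \<Longrightarrow> v \<in> V \<Longrightarrow> gdist V E u v \<le> gdiam V E"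
  unfolding gdiam_def by (rule Sup_upper) blast

lemma gdist_eq_3_iff_if_gdiam_3:
  assumes "gdiam V E = 3" "u \<in> V" "v \<in> V"
  shows "gdist V E u v = 3 \<longleftrightarrow> \<not> gdist V E u v \<le> 2"
proof -
  have "gdist V E u v \<le> 3" using gdist_le_gdiam[OF assms(2,3), of E] assms(1) by simp
  then show ?thesis by (cases "gdist V E u v") (auto simp: numeral_eq_enat)
qed

lemma enat_le_3_cases: "(x::enat) \<le> 3 \<Longrightarrow> x \<le> 1 \<or> x = 2 \<or> x = 3"
  by (cases x) (auto simp: numeral_eq_enat one_enat_def)

definition closed_adj :: "'a set \<Rightarrow> ('a \<Rightarrow> 'a \<Rightarrow> bool) \<Rightarrow> 'a \<Rightarrow> 'a \<Rightarrow> bool" where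
  "closed_adj V E x y \<longleftrightarrow> x \<in> V \<and> y \<in> V \<and> (x = y \<or> E x y)"

lemma closed_adj_refl [simp]: "closed_adj V E x x \<longleftrightarrow> x \<in> V"
  by (simp add: closed_adj_def)

lemma closed_adj_commute: "simple_graph V E \<Longrightarrow> closed_adj V E x y \<longleftrightarrow> closed_adj V E y x"
  by (auto simp: closed_adj_def simple_graph_def)

lemma closed_adj_in_V:
  assumes "closed_adj V E x y" shows "x \<in> V" "y \<in> V"
  using assms by (simp_all add: closed_adj_def)

lemma mem_closed_nbhd_iff: "x \<in> V \<Longrightarrow> y \<in> closed_nbhd V E x \<longleftrightarrow> closed_adj V E x y"
  by (auto simp: closed_nbhd_def closed_adj_def)

lemma closed_nbhd_eq_Collect: "x \<in> V \<Longrightarrow> closed_nbhd V E x = {w. closed_adj V E x w}"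
  by (auto simp: closed_nbhd_def closed_adj_def)

lemma universal_iff: "universal V E x \<longleftrightarrow> x \<in> V \<and> (\<forall>y\<in>V. closed_adj V E x y)"
  by (auto simp: universal_def closed_nbhd_def closed_adj_def)

lemma ex_le_Suc_iff: "(\<exists>m\<le>Suc n. P m) \<longleftrightarrow> (\<exists>m\<le>n. P m) \<or> P (Suc n)"
  by (auto simp: le_Suc_eq)

lemma gdist_le_1_iff:
  assumes "simple_graph V E"
  shows "gdist V E u v \<le> 1 \<longleftrightarrow> closed_adj V E u v"
  using assms unfolding one_enat_def gdist_le_enat_iff One_nat_def ex_le_Suc_iff
  by (auto simp: walk_len_Suc_iff walk_len_0_iff closed_adj_def simple_graph_def)

lemma gdist_le_2_iff:
  assumes "simple_graph V E"
  shows "gdist V E u v \<le> 2 \<longleftrightarrow> (\<exists>w. closed_adj V E u w \<and> closed_adj V E w v)"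
  using assms unfolding numeral_eq_enat gdist_le_enat_iff numeral_2_eq_2 ex_le_Suc_iff
  by (auto simp: walk_len_Suc_iff walk_len_0_iff closed_adj_def simple_graph_def)

definition closed_nbhds_disjoint :: "'a set \<Rightarrow> ('a \<Rightarrow> 'a \<Rightarrow> bool) \<Rightarrow> 'a \<Rightarrow> 'a \<Rightarrow> bool" where
  "closed_nbhds_disjoint V E x y \<longleftrightarrow>
     x \<in> V \<and> y \<in> V \<and> (\<forall>w. \<not> (closed_adj V E x w \<and> closed_adj V E y w))"

definition closed_twins :: "'a set \<Rightarrow> ('a \<Rightarrow> 'a \<Rightarrow> bool) \<Rightarrow> 'a \<Rightarrow> 'a \<Rightarrow> bool" where
  "closed_twins V E x y \<longleftrightarrow> (\<forall>w. closed_adj V E x w \<longleftrightarrow> closed_adj V E y w)"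

lemma closed_nbhds_disjoint_commute:
  "closed_nbhds_disjoint V E x y \<longleftrightarrow> closed_nbhds_disjoint V E y x"
  unfolding closed_nbhds_disjoint_def by blast

lemma closed_twins_refl [simp]: "closed_twins V E x x"
  by (simp add: closed_twins_def)

lemma closed_twins_universal_iff:
  assumes "closed_twins V E x y" "x \<in> V"
  shows "universal V E x \<longleftrightarrow> universal V E y"
proof -
  have "y \<in> V" using assms unfolding closed_twins_def by (metis closed_adj_refl closed_adj_in_V)
  then show ?thesis using assms unfolding closed_twins_def universal_iff by blast
qed

lemma closed_nbhd_eq_iff_closed_twins:
  "x \<in> V \<Longrightarrow> y \<in> V \<Longrightarrow> closed_nbhd V E x = closed_nbhd V E y \<longleftrightarrow> closed_twins V E x y"
  by (simp add: closed_nbhd_eq_Collect closed_twins_def set_eq_iff)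

lemma gamma_pair_iff:
  "gamma_pair V E x y \<longleftrightarrow>
     closed_nbhds_disjoint V E x y \<and> (\<forall>w\<in>V. closed_adj V E x w \<or> closed_adj V E y w)"
proof (cases "x \<in> V \<and> y \<in> V")
  case True
  have "closed_adj V E w v \<Longrightarrow> v \<in> V" for w v by (simp add: closed_adj_def)
  then show ?thesis
    using True closed_adj_refl[of V E x]
    unfolding gamma_pair_def closed_nbhds_disjoint_def closed_nbhd_eq_Collect[OF conjunct1[OF True]]
      closed_nbhd_eq_Collect[OF conjunct2[OF True]]
    by blast
qed (auto simp: gamma_pair_def closed_nbhds_disjoint_def)

lemma gamma_pair_commute: "gamma_pair V E x y \<longleftrightarrow> gamma_pair V E y x"
  unfolding gamma_pair_iff closed_nbhds_disjoint_def by blast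

lemma gdist_le_2_iff_not_disjoint:
  assumes "simple_graph V E" "u \<in> V" "v \<in> V"
  shows "gdist V E u v \<le> 2 \<longleftrightarrow> \<not> closed_nbhds_disjoint V E u v"
  using assms closed_adj_commute[OF assms(1)]
  unfolding gdist_le_2_iff[OF assms(1)] closed_nbhds_disjoint_def by blast

lemma gdist_eq_2_iff:
  assumes "simple_graph V E" "u \<in> V" "v \<in> V"
  shows "gdist V E u v = 2 \<longleftrightarrow> \<not> closed_adj V E u v \<and> \<not> closed_nbhds_disjoint V E u v"
proof -
  have "x = 2 \<longleftrightarrow> x \<le> 2 \<and> \<not> x \<le> 1" for x :: enat
    by (cases x) (auto simp: numeral_eq_enat one_enat_def)
  then show ?thesis
    using gdist_le_1_iff[OF assms(1)] gdist_le_2_iff_not_disjoint[OF assms] by blast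
qed

section \<open>Mutually maximally distant pairs\<close>

text \<open>Neighbours of \<open>u\<close> are within \<open>d(u, v) + 1\<close> of \<open>v\<close>, so excluding the value
\<open>d(u, v) + 1\<close> is the same as bounding by \<open>d(u, v)\<close>.\<close>

lemma mmd_iff_closed_nbhds_within:
  assumes G: "simple_graph V E" and "u \<noteq> v" and uv: "gdist V E u v = enat n"
  shows "mmd V E u v \<longleftrightarrow>
    (\<forall>x. closed_adj V E u x \<longrightarrow> gdist V E x v \<le> enat n) \<and>
    (\<forall>y. closed_adj V E v y \<longrightarrow> gdist V E y u \<le> enat n)"
proof -
  have "gdist V E u v \<le> enat n" using uv by simp
  then obtain m where walk: "walk_len V E m u v" unfolding gdist_le_enat_iff by blast
  have in_V: "u \<in> V" "v \<in> V" using walk_len_in_V[OF walk] by auto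
  have vu: "gdist V E v u = enat n"
    using gdist_commute[OF G, of v u] uv by (rule trans)
  have nbrs: "(\<forall>x. E z x \<longrightarrow> gdist V E x w \<noteq> enat n + 1) \<longleftrightarrow>
      (\<forall>x. closed_adj V E z x \<longrightarrow> gdist V E x w \<le> enat n)"
    if zw: "gdist V E z w = enat n" and "z \<in> V" for z w
  proof -
    have step: "gdist V E x w \<noteq> enat n + 1 \<longleftrightarrow> gdist V E x w \<le> enat n" if "E z x" for x
    proof -
      have "E x z" "x \<in> V" using G \<open>E z x\<close> unfolding simple_graph_def by blast+
      then have "gdist V E x w \<le> enat n + 1" using gdist_le_Suc_if_adj[of E x z V w] zw by simp
      then show ?thesis by (cases "gdist V E x w") (auto simp: one_enat_def)
    qed
    have "closed_adj V E z x \<longleftrightarrow> x = z \<or> E z x" for x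
      using G \<open>z \<in> V\<close> unfolding closed_adj_def simple_graph_def by blast
    then show ?thesis using step zw by auto
  qed
  show ?thesis
    unfolding mmd_def uv nbrs[OF uv in_V(1)] nbrs[OF vu in_V(2)] using in_V \<open>u \<noteq> v\<close> by simp
qed

lemma mmd_closed_adj_iff:
  assumes G: "simple_graph V E" and uv: "closed_adj V E u v"
  shows "mmd V E u v \<longleftrightarrow> u \<noteq> v \<and> closed_nbhd V E u = closed_nbhd V E v"
proof (cases "u = v")
  case False
  have in_V: "u \<in> V" "v \<in> V" using closed_adj_in_V[OF uv] by auto
  have "gdist V E u v \<le> 1" using gdist_le_1_iff[OF G] uv by blast
  moreover have "gdist V E u v \<noteq> 0" using gdist_eq_0_iff[OF in_V(1)] False by blast
  ultimately have "gdist V E u v = enat 1"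
    by (cases "gdist V E u v") (auto simp: one_enat_def zero_enat_def)
  then have "mmd V E u v \<longleftrightarrow>
      (\<forall>x. closed_adj V E u x \<longrightarrow> closed_adj V E x v) \<and> (\<forall>y. closed_adj V E v y \<longrightarrow> closed_adj V E y u)"
    using mmd_iff_closed_nbhds_within[OF G False, of 1]
    unfolding one_enat_def[symmetric] gdist_le_1_iff[OF G] by blast
  also have "\<dots> \<longleftrightarrow> closed_twins V E u v"
    unfolding closed_twins_def using closed_adj_commute[OF G] uv by blast
  finally show ?thesis using False closed_nbhd_eq_iff_closed_twins[OF in_V] by blast
qed (simp add: mmd_def)

lemma gdist_eq_2_and_mmd_iff:
  assumes G: "simple_graph V E" and in_V: "u \<in> V" "v \<in> V"
  shows "gdist V E u v = 2 \<and> mmd V E u v \<longleftrightarrow> \<not> closed_adj V E u v \<and>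
    (\<forall>x. closed_adj V E u x \<longrightarrow> \<not> closed_nbhds_disjoint V E x v) \<and>
    (\<forall>y. closed_adj V E v y \<longrightarrow> \<not> closed_nbhds_disjoint V E y u)"
proof -
  have mmd: "mmd V E u v \<longleftrightarrow>
      (\<forall>x. closed_adj V E u x \<longrightarrow> \<not> closed_nbhds_disjoint V E x v) \<and>
      (\<forall>y. closed_adj V E v y \<longrightarrow> \<not> closed_nbhds_disjoint V E y u)"
    if d2: "gdist V E u v = 2"
  proof -
    have "u \<noteq> v" using d2 gdist_eq_0_iff[OF in_V(1), of E v] by auto
    moreover have "gdist V E u v = enat 2" using d2 by (simp add: numeral_eq_enat)
    moreover have "gdist V E x w \<le> enat 2 \<longleftrightarrow> \<not> closed_nbhds_disjoint V E x w"
      if "closed_adj V E z x" "w \<in> V" for x z w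
      using gdist_le_2_iff_not_disjoint[OF G closed_adj_in_V(2)[OF that(1)] that(2)]
      by (simp add: numeral_eq_enat)
    ultimately show ?thesis using mmd_iff_closed_nbhds_within[OF G] in_V by simp
  qed
  have "\<not> closed_nbhds_disjoint V E u v"
    if "\<forall>x. closed_adj V E u x \<longrightarrow> \<not> closed_nbhds_disjoint V E x v"
    using that in_V(1) by simp
  then show ?thesis using mmd gdist_eq_2_iff[OF G in_V] by blast
qed

lemma mmd_if_gdist_eq_gdiam:
  assumes G: "simple_graph V E" and "u \<noteq> v" "u \<in> V" "v \<in> V"
    and uv: "gdist V E u v = gdiam V E" and diam: "gdiam V E = enat n"
  shows "mmd V E u v"
proof -
  have "gdist V E x w \<le> enat n" if "closed_adj V E z x" "w \<in> V" for x z w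
    using gdist_le_gdiam[of x V w E] that diam by (simp add: closed_adj_def)
  then show ?thesis
    using mmd_iff_closed_nbhds_within[OF G \<open>u \<noteq> v\<close>] uv diam assms(3,4) by simp
qed

section \<open>Distance at most two in the modular product\<close>

lemma closed_adj_modprod_iff:
  "closed_adj (modprod_V VG VH) (modprod_E VG EG VH EH) (g, h) (c, d) \<longleftrightarrow>
     g \<in> VG \<and> c \<in> VG \<and> h \<in> VH \<and> d \<in> VH \<and> (closed_adj VG EG g c \<longleftrightarrow> closed_adj VH EH h d)"
  unfolding closed_adj_def modprod_V_def modprod_E_def by auto

lemma simple_graph_modprod:
  "simple_graph VG EG \<Longrightarrow> simple_graph VH EH \<Longrightarrow>
    simple_graph (modprod_V VG VH) (modprod_E VG EG VH EH)"
  unfolding simple_graph_def modprod_V_def modprod_E_def by auto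

definition modprod_far :: "'a set \<Rightarrow> ('a \<Rightarrow> 'a \<Rightarrow> bool) \<Rightarrow> 'b set \<Rightarrow> ('b \<Rightarrow> 'b \<Rightarrow> bool)
    \<Rightarrow> 'a \<Rightarrow> 'b \<Rightarrow> 'a \<Rightarrow> 'b \<Rightarrow> bool" where
  "modprod_far VG EG VH EH g h c d \<longleftrightarrow>
     closed_twins VG EG g c \<and> closed_nbhds_disjoint VH EH h d \<and>
       (universal VG EG g \<or> gamma_pair VH EH h d) \<or>
     closed_twins VH EH h d \<and> closed_nbhds_disjoint VG EG g c \<and>
       (universal VH EH h \<or> gamma_pair VG EG g c)"

lemma modprod_far_swap:
  "modprod_far VH EH VG EG h g d c \<longleftrightarrow> modprod_far VG EG VH EH g h c d"
  unfolding modprod_far_def by blast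

lemma modprod_far_if_no_midpoint:
  assumes G: "simple_graph VG EG" and H: "simple_graph VH EH"
    and in_V: "g \<in> VG" "h \<in> VH" "d \<in> VH"
    and none: "\<And>a b. a \<in> VG \<Longrightarrow> b \<in> VH \<Longrightarrow> (closed_adj VG EG g a \<longleftrightarrow> closed_adj VH EH h b) \<Longrightarrow>
      \<not> (closed_adj VG EG a c \<longleftrightarrow> closed_adj VH EH b d)"
    and gc: "closed_adj VG EG g c"
  shows "closed_twins VG EG g c \<and> closed_nbhds_disjoint VH EH h d \<and>
    (universal VG EG g \<or> gamma_pair VH EH h d)"
proof -
  note G_comm = closed_adj_commute[OF G] and H_comm = closed_adj_commute[OF H]
  have hd: "\<not> closed_adj VH EH h d" using none[OF in_V(1,2)] in_V gc by simp
  have disj: "closed_nbhds_disjoint VH EH h d"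
    unfolding closed_nbhds_disjoint_def
  proof (intro conjI allI notI)
    fix b assume hb: "closed_adj VH EH h b \<and> closed_adj VH EH d b"
    then have "b \<in> VH" by (simp add: closed_adj_def)
    then show False using none[OF in_V(1) \<open>b \<in> VH\<close>] in_V hb gc H_comm[of b d] by simp
  qed (use in_V in auto)
  have twins: "closed_twins VG EG g c"
    unfolding closed_twins_def
  proof (intro allI iffI)
    fix a assume ga: "closed_adj VG EG g a"
    then have "a \<in> VG" by (simp add: closed_adj_def)
    then show "closed_adj VG EG c a"
      using none[OF _ in_V(2)] in_V ga hd G_comm[of a c] by simp
  next
    fix a assume ca: "closed_adj VG EG c a"
    then have "a \<in> VG" by (simp add: closed_adj_def)
    show "closed_adj VG EG g a"
    proof (rule ccontr)
      assume "\<not> closed_adj VG EG g a"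
      then show False
        using none[OF \<open>a \<in> VG\<close> in_V(3)] in_V hd ca G_comm[of a c] by simp
    qed
  qed
  have "gamma_pair VH EH h d" if "\<not> universal VG EG g"
  proof -
    from that in_V(1) obtain a where a: "a \<in> VG" "\<not> closed_adj VG EG g a"
      unfolding universal_iff by auto
    have ac: "\<not> closed_adj VG EG a c"
      using a(2) twins G_comm[of a c] unfolding closed_twins_def by simp
    have "closed_adj VH EH h b \<or> closed_adj VH EH d b" if "b \<in> VH" for b
      using none[OF a(1) that] a(2) ac H_comm[of b d] by auto
    then show ?thesis using disj unfolding gamma_pair_iff by blast
  qed
  with disj twins show ?thesis by blast
qed

lemma no_midpoint_if_modprod_far:
  assumes G: "simple_graph VG EG" and H: "simple_graph VH EH"
    and twins: "closed_twins VG EG g c" and disj: "closed_nbhds_disjoint VH EH h d"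
    and univ: "universal VG EG g \<or> gamma_pair VH EH h d"
    and "a \<in> VG" "b \<in> VH" and ab: "closed_adj VG EG g a \<longleftrightarrow> closed_adj VH EH h b"
  shows "\<not> (closed_adj VG EG a c \<longleftrightarrow> closed_adj VH EH b d)"
proof -
  have "closed_adj VG EG a c \<longleftrightarrow> closed_adj VG EG g a"
    using twins closed_adj_commute[OF G, of a c] unfolding closed_twins_def by simp
  moreover have "\<not> (closed_adj VH EH h b \<and> closed_adj VH EH b d)"
    using disj closed_adj_commute[OF H, of b d] unfolding closed_nbhds_disjoint_def by simp
  moreover have "closed_adj VH EH h b \<or> closed_adj VH EH b d" if "\<not> closed_adj VG EG g a"
    using univ that \<open>a \<in> VG\<close> \<open>b \<in> VH\<close> closed_adj_commute[OF H, of b d]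
    unfolding universal_iff gamma_pair_iff by auto
  ultimately show ?thesis using ab by blast
qed

lemma modprod_far_iff_no_midpoint:
  assumes G: "simple_graph VG EG" and H: "simple_graph VH EH"
    and in_V: "g \<in> VG" "c \<in> VG" "h \<in> VH" "d \<in> VH"
  shows "modprod_far VG EG VH EH g h c d \<longleftrightarrow>
    \<not> (\<exists>a\<in>VG. \<exists>b\<in>VH. (closed_adj VG EG g a \<longleftrightarrow> closed_adj VH EH h b) \<and>
        (closed_adj VG EG a c \<longleftrightarrow> closed_adj VH EH b d))"
proof
  assume "modprod_far VG EG VH EH g h c d"
  then show "\<not> (\<exists>a\<in>VG. \<exists>b\<in>VH. (closed_adj VG EG g a \<longleftrightarrow> closed_adj VH EH h b) \<and>
        (closed_adj VG EG a c \<longleftrightarrow> closed_adj VH EH b d))"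
    using no_midpoint_if_modprod_far[OF G H, of g c h d]
      no_midpoint_if_modprod_far[OF H G, of h d g c]
    unfolding modprod_far_def by blast
next
  assume "\<not> (\<exists>a\<in>VG. \<exists>b\<in>VH. (closed_adj VG EG g a \<longleftrightarrow> closed_adj VH EH h b) \<and>
        (closed_adj VG EG a c \<longleftrightarrow> closed_adj VH EH b d))"
  then have none: "\<And>a b. a \<in> VG \<Longrightarrow> b \<in> VH \<Longrightarrow>
      (closed_adj VG EG g a \<longleftrightarrow> closed_adj VH EH h b) \<Longrightarrow>
      \<not> (closed_adj VG EG a c \<longleftrightarrow> closed_adj VH EH b d)"
    and none': "\<And>b a. b \<in> VH \<Longrightarrow> a \<in> VG \<Longrightarrow>
      (closed_adj VH EH h b \<longleftrightarrow> closed_adj VG EG g a) \<Longrightarrow>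
      \<not> (closed_adj VH EH b d \<longleftrightarrow> closed_adj VG EG a c)"
    by blast+
  have "\<not> (closed_adj VG EG g c \<longleftrightarrow> closed_adj VH EH h d)"
    using none[OF in_V(1,3)] in_V by simp
  then consider "closed_adj VG EG g c" | "closed_adj VH EH h d" by blast
  then show "modprod_far VG EG VH EH g h c d"
  proof cases
    case 1
    then show ?thesis using modprod_far_if_no_midpoint[OF G H in_V(1,3,4) none]
      unfolding modprod_far_def by blast
  next
    case 2
    then show ?thesis using modprod_far_if_no_midpoint[OF H G in_V(3,1,2) none']
      unfolding modprod_far_def by blast
  qed
qed

lemma gdist_modprod_le_2_iff:
  assumes G: "simple_graph VG EG" and H: "simple_graph VH EH"
    and in_V: "g \<in> VG" "c \<in> VG" "h \<in> VH" "d \<in> VH"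
  shows "gdist (modprod_V VG VH) (modprod_E VG EG VH EH) (g, h) (c, d) \<le> 2 \<longleftrightarrow>
    \<not> modprod_far VG EG VH EH g h c d"
  unfolding gdist_le_2_iff[OF simple_graph_modprod[OF G H]] split_paired_Ex closed_adj_modprod_iff
    modprod_far_iff_no_midpoint[OF G H in_V]
  using in_V by blast

lemma modprod_far_commute:
  assumes G: "simple_graph VG EG" and H: "simple_graph VH EH"
    and in_V: "g \<in> VG" "c \<in> VG" "h \<in> VH" "d \<in> VH"
  shows "modprod_far VG EG VH EH g h c d \<longleftrightarrow> modprod_far VG EG VH EH c d g h"
  using gdist_modprod_le_2_iff[OF G H in_V] gdist_modprod_le_2_iff[OF G H in_V(2,1,4,3)]
    gdist_commute[OF simple_graph_modprod[OF G H], of "(g, h)" "(c, d)"]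
  by simp

lemma boundary_vertex_modprod_iff:
  assumes G: "simple_graph VG EG" and H: "simple_graph VH EH"
    and diam: "gdiam (modprod_V VG VH) (modprod_E VG EG VH EH) = 3"
    and in_V: "g \<in> VG" "h \<in> VH"
  shows "boundary_vertex (modprod_V VG VH) (modprod_E VG EG VH EH) (g, h) \<longleftrightarrow>
    (\<exists>c\<in>VG. \<exists>d\<in>VH. modprod_far VG EG VH EH g h c d)"
proof -
  have "gdist (modprod_V VG VH) (modprod_E VG EG VH EH) (g, h) (c, d) = 3 \<longleftrightarrow>
      modprod_far VG EG VH EH g h c d" if "c \<in> VG" "d \<in> VH" for c d
    using gdist_eq_3_iff_if_gdiam_3[OF diam]
      gdist_modprod_le_2_iff[OF G H in_V(1) that(1) in_V(2) that(2)] in_V that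
    by (simp add: modprod_V_def)
  then show ?thesis
    unfolding boundary_vertex_def diam using in_V by (auto simp: modprod_V_def)
qed

section \<open>Mutually maximally distant pairs at distance two in the product\<close>

definition modprod_nbhd_within_2 :: "'a set \<Rightarrow> ('a \<Rightarrow> 'a \<Rightarrow> bool) \<Rightarrow> 'b set \<Rightarrow> ('b \<Rightarrow> 'b \<Rightarrow> bool)
    \<Rightarrow> 'a \<Rightarrow> 'b \<Rightarrow> 'a \<Rightarrow> 'b \<Rightarrow> bool" where
  "modprod_nbhd_within_2 VG EG VH EH g h g' h' \<longleftrightarrow>
     (\<forall>c\<in>VG. \<forall>d\<in>VH. (closed_adj VG EG g c \<longleftrightarrow> closed_adj VH EH h d) \<longrightarrow>
        \<not> modprod_far VG EG VH EH c d g' h')"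

lemma modprod_nbhd_within_2_swap:
  "modprod_nbhd_within_2 VH EH VG EG h g h' g' \<longleftrightarrow> modprod_nbhd_within_2 VG EG VH EH g h g' h'"
  unfolding modprod_nbhd_within_2_def modprod_far_swap[of VH EH VG EG] by blast

lemma mmd_modprod_iff_nbhds_within_2:
  assumes G: "simple_graph VG EG" and H: "simple_graph VH EH"
    and in_V: "g \<in> VG" "g' \<in> VG" "h \<in> VH" "h' \<in> VH"
    and d2: "gdist (modprod_V VG VH) (modprod_E VG EG VH EH) (g, h) (g', h') = 2"
  shows "mmd (modprod_V VG VH) (modprod_E VG EG VH EH) (g, h) (g', h') \<longleftrightarrow>
    modprod_nbhd_within_2 VG EG VH EH g h g' h' \<and> modprod_nbhd_within_2 VG EG VH EH g' h' g h"
proof -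
  have "(g, h) \<in> modprod_V VG VH" using in_V by (simp add: modprod_V_def)
  then have ne: "(g, h) \<noteq> (g', h')"
    using d2 gdist_eq_0_iff[of "(g, h)" _ "modprod_E VG EG VH EH" "(g', h')"] by auto
  have "gdist (modprod_V VG VH) (modprod_E VG EG VH EH) (g, h) (g', h') = enat 2"
    using d2 by (simp add: numeral_eq_enat)
  then have "mmd (modprod_V VG VH) (modprod_E VG EG VH EH) (g, h) (g', h') \<longleftrightarrow>
    (\<forall>c d. closed_adj (modprod_V VG VH) (modprod_E VG EG VH EH) (g, h) (c, d) \<longrightarrow>
       gdist (modprod_V VG VH) (modprod_E VG EG VH EH) (c, d) (g', h') \<le> 2) \<and>
    (\<forall>c d. closed_adj (modprod_V VG VH) (modprod_E VG EG VH EH) (g', h') (c, d) \<longrightarrow>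
       gdist (modprod_V VG VH) (modprod_E VG EG VH EH) (c, d) (g, h) \<le> 2)"
    using mmd_iff_closed_nbhds_within[OF simple_graph_modprod[OF G H] ne]
    by (simp add: numeral_eq_enat)
  then show ?thesis
    unfolding closed_adj_modprod_iff modprod_nbhd_within_2_def
    using gdist_modprod_le_2_iff[OF G H] in_V by auto
qed

lemma modprod_nbhd_within_2_if_not_far:
  assumes G: "simple_graph VG EG" and H: "simple_graph VH EH"
    and in_V: "g' \<in> VG" "h' \<in> VH"
    and not_far: "\<not> (\<exists>c\<in>VG. \<exists>d\<in>VH. modprod_far VG EG VH EH g' h' c d)"
  shows "modprod_nbhd_within_2 VG EG VH EH g h g' h'"
  unfolding modprod_nbhd_within_2_def
proof (intro ballI impI)
  fix c d assume "c \<in> VG" "d \<in> VH"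
  then show "\<not> modprod_far VG EG VH EH c d g' h'"
    using not_far modprod_far_commute[OF G H \<open>c \<in> VG\<close> in_V(1) \<open>d \<in> VH\<close> in_V(2)] by auto
qed

text \<open>Conditions (iv) and (v) of the theorem, with \<open>G\<close> in the role of the factor containing
the universal vertex \<open>g\<close>; the remaining cases are obtained by exchanging the factors or the
two vertices.\<close>

definition condition_iv :: "'a set \<Rightarrow> ('a \<Rightarrow> 'a \<Rightarrow> bool) \<Rightarrow> 'b set \<Rightarrow> ('b \<Rightarrow> 'b \<Rightarrow> bool)
    \<Rightarrow> 'a \<Rightarrow> 'b \<Rightarrow> 'a \<Rightarrow> 'b \<Rightarrow> bool" where
  "condition_iv VG EG VH EH g h g' h' \<longleftrightarrow>
     universal VG EG g \<and> universal VG EG g' \<and> gdist VH EH h h' = 2 \<and> mmd VH EH h h'"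

definition condition_v :: "'a set \<Rightarrow> ('a \<Rightarrow> 'a \<Rightarrow> bool) \<Rightarrow> 'b set \<Rightarrow> ('b \<Rightarrow> 'b \<Rightarrow> bool)
    \<Rightarrow> 'a \<Rightarrow> 'b \<Rightarrow> 'a \<Rightarrow> 'b \<Rightarrow> bool" where
  "condition_v VG EG VH EH g h g' h' \<longleftrightarrow>
     universal VG EG g \<and> \<not> universal VG EG g' \<and> gdist VH EH h h' = 2 \<and>
     (\<forall>h''\<in>closed_nbhd VH EH h'. gdist VH EH h h'' \<le> 2) \<and>
     \<not> (\<exists>x. gamma_pair VH EH h' x \<or> gamma_pair VH EH x h')"

lemma condition_iv_iff:
  assumes H: "simple_graph VH EH" and in_V: "h \<in> VH" "h' \<in> VH"
  shows "condition_iv VG EG VH EH g h g' h' \<longleftrightarrow>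
    universal VG EG g \<and> universal VG EG g' \<and> \<not> closed_adj VH EH h h' \<and>
    (\<forall>x. closed_adj VH EH h x \<longrightarrow> \<not> closed_nbhds_disjoint VH EH x h') \<and>
    (\<forall>y. closed_adj VH EH h' y \<longrightarrow> \<not> closed_nbhds_disjoint VH EH y h)"
  unfolding condition_iv_def using gdist_eq_2_and_mmd_iff[OF H in_V] by blast

lemma condition_iv_commute:
  assumes H: "simple_graph VH EH" and in_V: "h \<in> VH" "h' \<in> VH"
  shows "condition_iv VG EG VH EH g h g' h' \<longleftrightarrow> condition_iv VG EG VH EH g' h' g h"
  unfolding condition_iv_iff[OF H in_V] condition_iv_iff[OF H in_V(2,1)]
  using closed_adj_commute[OF H, of h h'] by blast

lemma condition_v_iff:
  assumes H: "simple_graph VH EH" and in_V: "h \<in> VH" "h' \<in> VH"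
  shows "condition_v VG EG VH EH g h g' h' \<longleftrightarrow>
    universal VG EG g \<and> \<not> universal VG EG g' \<and> \<not> closed_adj VH EH h h' \<and>
    (\<forall>z. closed_adj VH EH h' z \<longrightarrow> \<not> closed_nbhds_disjoint VH EH h z) \<and>
    (\<forall>x. \<not> gamma_pair VH EH h' x)"
proof -
  have "gdist VH EH h z \<le> 2 \<longleftrightarrow> \<not> closed_nbhds_disjoint VH EH h z"
    if "closed_adj VH EH h' z" for z
    using gdist_le_2_iff_not_disjoint[OF H in_V(1) closed_adj_in_V(2)[OF that]] .
  then have "(\<forall>h''\<in>closed_nbhd VH EH h'. gdist VH EH h h'' \<le> 2) \<longleftrightarrow>
      (\<forall>z. closed_adj VH EH h' z \<longrightarrow> \<not> closed_nbhds_disjoint VH EH h z)"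
    by (auto simp: mem_closed_nbhd_iff[OF in_V(2)])
  moreover have "\<not> closed_nbhds_disjoint VH EH h h'"
    if "\<forall>z. closed_adj VH EH h' z \<longrightarrow> \<not> closed_nbhds_disjoint VH EH h z"
    using that in_V(2) by simp
  ultimately show ?thesis
    unfolding condition_v_def
    using gdist_eq_2_iff[OF H in_V] gamma_pair_commute[of VH EH h'] by blast
qed

lemma condition_iv_mismatch:
  assumes H: "simple_graph VH EH" and "h \<in> VH" "h' \<in> VH"
    and "condition_iv VG EG VH EH g h g' h'"
  shows "closed_adj VG EG g g' \<and> \<not> closed_adj VH EH h h'"
  using assms unfolding condition_iv_iff[OF assms(1-3)] universal_iff by blast

lemma condition_v_mismatch:
  assumes H: "simple_graph VH EH" and "g' \<in> VG" "h \<in> VH" "h' \<in> VH"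
    and "condition_v VG EG VH EH g h g' h'"
  shows "closed_adj VG EG g g' \<and> \<not> closed_adj VH EH h h'"
  using assms unfolding condition_v_iff[OF assms(1,3,4)] universal_iff by blast

lemma modprod_far_twin:
  "closed_nbhds_disjoint VH EH d e \<Longrightarrow> universal VG EG x \<or> gamma_pair VH EH d e \<Longrightarrow>
    modprod_far VG EG VH EH x d x e"
  unfolding modprod_far_def by simp

lemma universal_if_far_in_second_factor:
  assumes G: "simple_graph VG EG" and H: "simple_graph VH EH"
    and in_V: "g \<in> VG" "h' \<in> VH"
    and mismatch: "\<not> (closed_adj VG EG g g' \<longleftrightarrow> closed_adj VH EH h h')"
    and near': "modprod_nbhd_within_2 VG EG VH EH g' h' g h"
    and disj_hb: "closed_nbhds_disjoint VH EH h b"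
    and univ_or_gamma: "universal VG EG g \<or> gamma_pair VH EH h b"
  shows "universal VG EG g \<and> closed_adj VG EG g g' \<and> \<not> closed_adj VH EH h h' \<and>
    (\<forall>z. closed_adj VH EH h' z \<longrightarrow> \<not> closed_nbhds_disjoint VH EH h z)"
proof -
  have near_at: "\<not> modprod_far VG EG VH EH g d g h"
    if "d \<in> VH" "closed_adj VG EG g' g \<longleftrightarrow> closed_adj VH EH h' d" for d
    using near' that in_V(1) unfolding modprod_nbhd_within_2_def by blast
  have b: "b \<in> VH" using disj_hb by (simp add: closed_nbhds_disjoint_def)
  have far_b: "modprod_far VG EG VH EH g b g h"
    using modprod_far_twin disj_hb univ_or_gamma closed_nbhds_disjoint_commute[of VH EH h b]
      gamma_pair_commute[of VH EH h b] by metis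
  have hh': "\<not> closed_adj VH EH h h'"
  proof
    assume hh': "closed_adj VH EH h h'"
    then have "\<not> closed_adj VH EH h' b"
      using disj_hb closed_adj_commute[OF H, of h' b] unfolding closed_nbhds_disjoint_def by blast
    moreover have "\<not> closed_adj VG EG g' g"
      using mismatch hh' closed_adj_commute[OF G, of g g'] by blast
    ultimately show False using near_at[OF b] far_b by blast
  qed
  then have gg': "closed_adj VG EG g g'" using mismatch by blast
  \<comment> \<open>the neighbours \<open>(g, d)\<close> of \<open>(g', h')\<close> must stay within distance 2 of \<open>(g, h)\<close>\<close>
  have near_h': "\<not> (closed_nbhds_disjoint VH EH d h \<and> (universal VG EG g \<or> gamma_pair VH EH d h))"
    if "closed_adj VH EH h' d" for d
    using near_at[OF closed_adj_in_V(2)[OF that]] modprod_far_twin[of VH EH d h VG EG g] that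
      gg' closed_adj_commute[OF G, of g g'] by blast
  have univ_g: "universal VG EG g"
  proof (rule ccontr)
    assume "\<not> universal VG EG g"
    then have gamma: "gamma_pair VH EH h b" using univ_or_gamma by blast
    then have "closed_adj VH EH h' b"
      using hh' in_V(2) closed_adj_commute[OF H, of b h'] unfolding gamma_pair_iff by blast
    then show False
      using near_h' gamma disj_hb closed_nbhds_disjoint_commute[of VH EH h b]
        gamma_pair_commute[of VH EH h b] by blast
  qed
  then show ?thesis
    using gg' hh' near_h' closed_nbhds_disjoint_commute[of VH EH h] by blast
qed

lemma condition_iv_or_v_if_universal:
  assumes H: "simple_graph VH EH"
    and in_V: "g' \<in> VG" "h \<in> VH" "h' \<in> VH"
    and near: "modprod_nbhd_within_2 VG EG VH EH g h g' h'"
    and univ_g: "universal VG EG g" and gg': "closed_adj VG EG g g'"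
    and hh': "\<not> closed_adj VH EH h h'"
    and near_h': "\<forall>z. closed_adj VH EH h' z \<longrightarrow> \<not> closed_nbhds_disjoint VH EH h z"
  shows "condition_iv VG EG VH EH g h g' h' \<or> condition_v VG EG VH EH g h g' h'"
proof -
  \<comment> \<open>the neighbours \<open>(g', x)\<close> of \<open>(g, h)\<close> must stay within distance 2 of \<open>(g', h')\<close>\<close>
  have near_at: "\<not> modprod_far VG EG VH EH g' x g' h'" if "closed_adj VH EH h x" for x
    using near in_V(1) closed_adj_in_V(2)[OF that] gg' that
    unfolding modprod_nbhd_within_2_def by blast
  show ?thesis
  proof (cases "universal VG EG g'")
    case True
    then have "\<not> closed_nbhds_disjoint VH EH x h'" if "closed_adj VH EH h x" for x
      using near_at[OF that] modprod_far_twin[of VH EH x h' VG EG g'] by blast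
    then show ?thesis
      unfolding condition_iv_iff[OF H in_V(2,3)]
      using univ_g True hh' near_h' closed_nbhds_disjoint_commute[of VH EH h] by blast
  next
    case False
    have "\<not> gamma_pair VH EH h' e" for e
    proof
      assume gamma: "gamma_pair VH EH h' e"
      then have "closed_adj VH EH h e"
        using hh' in_V(2) closed_adj_commute[OF H, of e h] closed_adj_commute[OF H, of h' h]
        unfolding gamma_pair_iff by blast
      then show False
        using near_at modprod_far_twin[of VH EH e h' VG EG g'] gamma
          gamma_pair_commute[of VH EH h' e] closed_nbhds_disjoint_commute[of VH EH h' e]
        unfolding gamma_pair_iff by blast
    qed
    then show ?thesis
      unfolding condition_v_iff[OF H in_V(2,3)] using univ_g False hh' near_h' by blast
  qed
qed

lemma conditions_if_modprod_far:
  assumes G: "simple_graph VG EG" and H: "simple_graph VH EH"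
    and in_V: "g \<in> VG" "g' \<in> VG" "h \<in> VH" "h' \<in> VH"
    and mismatch: "\<not> (closed_adj VG EG g g' \<longleftrightarrow> closed_adj VH EH h h')"
    and near: "modprod_nbhd_within_2 VG EG VH EH g h g' h'"
    and near': "modprod_nbhd_within_2 VG EG VH EH g' h' g h"
    and far: "modprod_far VG EG VH EH g h c d"
  shows "condition_iv VG EG VH EH g h g' h' \<or> condition_v VG EG VH EH g h g' h' \<or>
    condition_iv VH EH VG EG h g h' g' \<or> condition_v VH EH VG EG h g h' g'"
proof -
  from far consider
    "closed_nbhds_disjoint VH EH h d" "universal VG EG g \<or> gamma_pair VH EH h d"
    | "closed_nbhds_disjoint VG EG g c" "universal VH EH h \<or> gamma_pair VG EG g c"
    unfolding modprod_far_def by blast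
  then show ?thesis
  proof cases
    case 1
    then show ?thesis
      using universal_if_far_in_second_factor[OF G H in_V(1,4) mismatch near']
        condition_iv_or_v_if_universal[OF H in_V(2-4) near] by blast
  next
    case 2
    have "\<not> (closed_adj VH EH h h' \<longleftrightarrow> closed_adj VG EG g g')" using mismatch by blast
    then show ?thesis
      using universal_if_far_in_second_factor[OF H G in_V(3,2) _
          modprod_nbhd_within_2_swap[THEN iffD2, OF near'] 2]
        condition_iv_or_v_if_universal[OF G in_V(4,1,2)
          modprod_nbhd_within_2_swap[THEN iffD2, OF near]]
      by blast
  qed
qed

lemma modprod_nbhds_within_2_if_condition_iv:
  assumes H: "simple_graph VH EH" and in_V: "h \<in> VH" "h' \<in> VH"
    and iv: "condition_iv VG EG VH EH g h g' h'"
  shows "modprod_nbhd_within_2 VG EG VH EH g h g' h' \<and> modprod_nbhd_within_2 VG EG VH EH g' h' g h"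
proof -
  have half: "modprod_nbhd_within_2 VG EG VH EH x y x' y'"
    if "universal VG EG x" "universal VG EG x'"
      "\<forall>z. closed_adj VH EH y z \<longrightarrow> \<not> closed_nbhds_disjoint VH EH z y'" for x y x' y'
    unfolding modprod_nbhd_within_2_def
  proof (intro ballI impI)
    fix c d assume c: "c \<in> VG" and "d \<in> VH" and cd: "closed_adj VG EG x c \<longleftrightarrow> closed_adj VH EH y d"
    have "closed_adj VH EH y d" using cd c that(1) unfolding universal_iff by blast
    then have "\<not> closed_nbhds_disjoint VH EH d y'" using that(3) by blast
    moreover have "\<not> closed_nbhds_disjoint VG EG c x'"
    proof -
      have "closed_adj VG EG c c" "closed_adj VG EG x' c"
        using c that(2) unfolding universal_iff by auto
      then show ?thesis unfolding closed_nbhds_disjoint_def by blast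
    qed
    ultimately show "\<not> modprod_far VG EG VH EH c d x' y'"
      unfolding modprod_far_def by blast
  qed
  show ?thesis
    using iv half unfolding condition_iv_iff[OF H in_V] by blast
qed

lemma modprod_nbhds_within_2_if_condition_v:
  assumes G: "simple_graph VG EG" and H: "simple_graph VH EH"
    and in_V: "g' \<in> VG" "h \<in> VH" "h' \<in> VH"
    and v: "condition_v VG EG VH EH g h g' h'"
  shows "modprod_nbhd_within_2 VG EG VH EH g h g' h' \<and> modprod_nbhd_within_2 VG EG VH EH g' h' g h"
proof -
  have univ_g: "universal VG EG g" and not_univ_g': "\<not> universal VG EG g'"
    and hh': "\<not> closed_adj VH EH h h'"
    and near_h': "\<forall>z. closed_adj VH EH h' z \<longrightarrow> \<not> closed_nbhds_disjoint VH EH h z"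
    and no_gamma: "\<forall>x. \<not> gamma_pair VH EH h' x"
    using v unfolding condition_v_iff[OF H in_V(2,3)] by blast+
  have "\<not> modprod_far VG EG VH EH c d g' h'"
    if c: "c \<in> VG" and "closed_adj VG EG g c \<longleftrightarrow> closed_adj VH EH h d" for c d
  proof
    assume far: "modprod_far VG EG VH EH c d g' h'"
    have hd: "closed_adj VH EH d h"
      using that univ_g closed_adj_commute[OF H, of h d] unfolding universal_iff by blast
    from far consider "closed_twins VG EG c g'" "universal VG EG c \<or> gamma_pair VH EH d h'"
      | "closed_twins VH EH d h'"
      unfolding modprod_far_def by blast
    then show False
    proof cases
      case 1
      then show False
        using closed_twins_universal_iff[OF 1(1) c] not_univ_g' no_gamma
          gamma_pair_commute[of VH EH d h'] by blast
    next
      case 2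
      then show False
        using hd hh' closed_adj_commute[OF H, of h h'] unfolding closed_twins_def by blast
    qed
  qed
  moreover have "\<not> modprod_far VG EG VH EH c d g h"
    if c: "c \<in> VG" and "closed_adj VG EG g' c \<longleftrightarrow> closed_adj VH EH h' d" for c d
  proof
    assume far: "modprod_far VG EG VH EH c d g h"
    from far consider "closed_twins VG EG c g" "closed_nbhds_disjoint VH EH d h"
      | "closed_nbhds_disjoint VG EG c g"
      unfolding modprod_far_def by blast
    then show False
    proof cases
      case 1
      have "universal VG EG c" using closed_twins_universal_iff[OF 1(1) c] univ_g by blast
      then have "closed_adj VH EH h' d"
        using that closed_adj_commute[OF G, of c g'] universal_iff[of VG EG c] in_V by auto
      then show False
        using near_h' 1(2) closed_nbhds_disjoint_commute[of VH EH d h] by blast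
    next
      case 2
      have "closed_adj VG EG c c" "closed_adj VG EG g c"
        using c univ_g unfolding universal_iff by auto
      then show False using 2 unfolding closed_nbhds_disjoint_def by blast
    qed
  qed
  ultimately show ?thesis unfolding modprod_nbhd_within_2_def by blast
qed

lemma modprod_nbhds_within_2_if_conditions:
  assumes G: "simple_graph VG EG" and H: "simple_graph VH EH"
    and in_V: "g \<in> VG" "g' \<in> VG" "h \<in> VH" "h' \<in> VH"
    and conditions: "condition_iv VG EG VH EH g h g' h' \<or> condition_iv VH EH VG EG h g h' g' \<or>
      condition_v VG EG VH EH g h g' h' \<or> condition_v VH EH VG EG h g h' g' \<or>
      condition_v VG EG VH EH g' h' g h \<or> condition_v VH EH VG EG h' g' h g"
  shows "modprod_nbhd_within_2 VG EG VH EH g h g' h' \<and> modprod_nbhd_within_2 VG EG VH EH g' h' g h"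
  using conditions
proof (elim disjE)
  assume "condition_iv VG EG VH EH g h g' h'"
  from modprod_nbhds_within_2_if_condition_iv[OF H in_V(3,4) this] show ?thesis .
next
  assume "condition_iv VH EH VG EG h g h' g'"
  from modprod_nbhds_within_2_if_condition_iv[OF G in_V(1,2) this] show ?thesis
    unfolding modprod_nbhd_within_2_swap[of VH EH VG EG] .
next
  assume "condition_v VG EG VH EH g h g' h'"
  from modprod_nbhds_within_2_if_condition_v[OF G H in_V(2,3,4) this] show ?thesis .
next
  assume "condition_v VH EH VG EG h g h' g'"
  from modprod_nbhds_within_2_if_condition_v[OF H G in_V(4,1,2) this] show ?thesis
    unfolding modprod_nbhd_within_2_swap[of VH EH VG EG] .
next
  assume "condition_v VG EG VH EH g' h' g h"
  from modprod_nbhds_within_2_if_condition_v[OF G H in_V(1,4,3) this] show ?thesis by blast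
next
  assume "condition_v VH EH VG EG h' g' h g"
  from modprod_nbhds_within_2_if_condition_v[OF H G in_V(3,2,1) this] show ?thesis
    unfolding modprod_nbhd_within_2_swap[of VH EH VG EG] by blast
qed

lemma modprod_nbhds_within_2_iff:
  assumes G: "simple_graph VG EG" and H: "simple_graph VH EH"
    and in_V: "g \<in> VG" "g' \<in> VG" "h \<in> VH" "h' \<in> VH"
    and mismatch: "\<not> (closed_adj VG EG g g' \<longleftrightarrow> closed_adj VH EH h h')"
  shows "modprod_nbhd_within_2 VG EG VH EH g h g' h' \<and> modprod_nbhd_within_2 VG EG VH EH g' h' g h \<longleftrightarrow>
    (\<not> (\<exists>c\<in>VG. \<exists>d\<in>VH. modprod_far VG EG VH EH g h c d) \<and>
     \<not> (\<exists>c\<in>VG. \<exists>d\<in>VH. modprod_far VG EG VH EH g' h' c d)) \<or>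
    condition_iv VG EG VH EH g h g' h' \<or> condition_iv VH EH VG EG h g h' g' \<or>
    condition_v VG EG VH EH g h g' h' \<or> condition_v VH EH VG EG h g h' g' \<or>
    condition_v VG EG VH EH g' h' g h \<or> condition_v VH EH VG EG h' g' h g"
    (is "?near \<longleftrightarrow> ?not_far \<or> ?conditions")
proof
  assume near: ?near
  have mismatch': "\<not> (closed_adj VG EG g' g \<longleftrightarrow> closed_adj VH EH h' h)"
    using mismatch closed_adj_commute[OF G, of g g'] closed_adj_commute[OF H, of h h'] by blast
  have "?conditions" if "modprod_far VG EG VH EH g h c d" for c d
    using conditions_if_modprod_far[OF G H in_V mismatch _ _ that] near by blast
  moreover have "?conditions" if "modprod_far VG EG VH EH g' h' c d" for c d
  proof -
    have "condition_iv VG EG VH EH g' h' g h \<or> condition_v VG EG VH EH g' h' g h \<or>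
        condition_iv VH EH VG EG h' g' h g \<or> condition_v VH EH VG EG h' g' h g"
      using conditions_if_modprod_far[OF G H in_V(2,1,4,3) mismatch' _ _ that] near by blast
    then show ?thesis
      unfolding condition_iv_commute[OF H in_V(4,3)] condition_iv_commute[OF G in_V(2,1)] by blast
  qed
  ultimately show "?not_far \<or> ?conditions" by blast
next
  assume "?not_far \<or> ?conditions"
  then show ?near
    using modprod_nbhd_within_2_if_not_far[OF G H in_V(2,4)]
      modprod_nbhd_within_2_if_not_far[OF G H in_V(1,3)]
      modprod_nbhds_within_2_if_conditions[OF G H in_V] by blast
qed

lemma mmd_modprod_gdist_2_iff:
  assumes G: "simple_graph VG EG" and H: "simple_graph VH EH"
    and diam: "gdiam (modprod_V VG VH) (modprod_E VG EG VH EH) = 3"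
    and in_V: "g \<in> VG" "g' \<in> VG" "h \<in> VH" "h' \<in> VH"
    and d2: "gdist (modprod_V VG VH) (modprod_E VG EG VH EH) (g, h) (g', h') = 2"
  shows "mmd (modprod_V VG VH) (modprod_E VG EG VH EH) (g, h) (g', h') \<longleftrightarrow>
    (\<not> boundary_vertex (modprod_V VG VH) (modprod_E VG EG VH EH) (g, h) \<and>
     \<not> boundary_vertex (modprod_V VG VH) (modprod_E VG EG VH EH) (g', h')) \<or>
    condition_iv VG EG VH EH g h g' h' \<or> condition_iv VH EH VG EG h g h' g' \<or>
    condition_v VG EG VH EH g h g' h' \<or> condition_v VH EH VG EG h g h' g' \<or>
    condition_v VG EG VH EH g' h' g h \<or> condition_v VH EH VG EG h' g' h g"
proof -
  have "\<not> gdist (modprod_V VG VH) (modprod_E VG EG VH EH) (g, h) (g', h') \<le> 1"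
    using d2 by (simp add: one_enat_def numeral_eq_enat)
  then have "\<not> closed_adj (modprod_V VG VH) (modprod_E VG EG VH EH) (g, h) (g', h')"
    using gdist_le_1_iff[OF simple_graph_modprod[OF G H], of "(g, h)" "(g', h')"] by simp
  then have mismatch: "\<not> (closed_adj VG EG g g' \<longleftrightarrow> closed_adj VH EH h h')"
    by (simp add: closed_adj_modprod_iff in_V)
  show ?thesis
    unfolding mmd_modprod_iff_nbhds_within_2[OF G H in_V d2]
      modprod_nbhds_within_2_iff[OF G H in_V mismatch]
      boundary_vertex_modprod_iff[OF G H diam in_V(1,3)]
      boundary_vertex_modprod_iff[OF G H diam in_V(2,4)]
    by blast
qed

lemma no_condition_if_closed_adj_modprod:
  assumes G: "simple_graph VG EG" and H: "simple_graph VH EH"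
    and in_V: "g \<in> VG" "g' \<in> VG" "h \<in> VH" "h' \<in> VH"
    and adj: "closed_adj (modprod_V VG VH) (modprod_E VG EG VH EH) (g, h) (g', h')"
  shows "\<not> (condition_iv VG EG VH EH g h g' h' \<or> condition_iv VH EH VG EG h g h' g' \<or>
    condition_v VG EG VH EH g h g' h' \<or> condition_v VH EH VG EG h g h' g' \<or>
    condition_v VG EG VH EH g' h' g h \<or> condition_v VH EH VG EG h' g' h g)"
proof -
  have "closed_adj VG EG g g' \<longleftrightarrow> closed_adj VH EH h h'"
    using adj by (simp add: closed_adj_modprod_iff)
  then show ?thesis
    using condition_iv_mismatch[OF H in_V(3,4), where g=g and g'=g']
      condition_iv_mismatch[OF G in_V(1,2), where g=h and g'=h']
      condition_v_mismatch[OF H in_V(2,3,4), where g=g]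
      condition_v_mismatch[OF G in_V(4,1,2), where g=h]
      condition_v_mismatch[OF H in_V(1,4,3), where g=g']
      condition_v_mismatch[OF G in_V(3,2,1), where g=h']
      closed_adj_commute[OF G, of g g'] closed_adj_commute[OF H, of h h'] by blast
qed

lemma mmd_modprod_iff:
  assumes G: "simple_graph VG EG" and H: "simple_graph VH EH"
    and diam: "gdiam (modprod_V VG VH) (modprod_E VG EG VH EH) = 3"
    and u: "(g, h) \<in> modprod_V VG VH" and v: "(g', h') \<in> modprod_V VG VH"
  shows "mmd (modprod_V VG VH) (modprod_E VG EG VH EH) (g, h) (g', h') \<longleftrightarrow>
    ((g, h) \<noteq> (g', h') \<and>
      closed_nbhd (modprod_V VG VH) (modprod_E VG EG VH EH) (g, h)
        = closed_nbhd (modprod_V VG VH) (modprod_E VG EG VH EH) (g', h')) \<or>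
    (gdist (modprod_V VG VH) (modprod_E VG EG VH EH) (g, h) (g', h') = 2 \<and>
      \<not> boundary_vertex (modprod_V VG VH) (modprod_E VG EG VH EH) (g, h) \<and>
      \<not> boundary_vertex (modprod_V VG VH) (modprod_E VG EG VH EH) (g', h')) \<or>
    gdist (modprod_V VG VH) (modprod_E VG EG VH EH) (g, h) (g', h') = 3 \<or>
    condition_iv VG EG VH EH g h g' h' \<or> condition_iv VH EH VG EG h g h' g' \<or>
    condition_v VG EG VH EH g h g' h' \<or> condition_v VH EH VG EG h g h' g' \<or>
    condition_v VG EG VH EH g' h' g h \<or> condition_v VH EH VG EG h' g' h g"
proof -
  let ?V = "modprod_V VG VH" and ?E = "modprod_E VG EG VH EH"
  have P: "simple_graph ?V ?E" using simple_graph_modprod[OF G H] .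
  have in_V: "g \<in> VG" "g' \<in> VG" "h \<in> VH" "h' \<in> VH" using u v by (simp_all add: modprod_V_def)
  have "gdist ?V ?E (g, h) (g', h') \<le> 3" using gdist_le_gdiam[OF u v, of ?E] diam by simp
  then consider (adj) "closed_adj ?V ?E (g, h) (g', h')"
    | (d2) "gdist ?V ?E (g, h) (g', h') = 2" | (d3) "gdist ?V ?E (g, h) (g', h') = 3"
    using enat_le_3_cases gdist_le_1_iff[OF P, of "(g, h)" "(g', h')"] by blast
  then show ?thesis
  proof cases
    case adj
    then have "gdist ?V ?E (g, h) (g', h') \<le> 1"
      using gdist_le_1_iff[OF P, of "(g, h)" "(g', h')"] by simp
    then have "gdist ?V ?E (g, h) (g', h') \<noteq> 2" "gdist ?V ?E (g, h) (g', h') \<noteq> 3"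
      by (auto simp: one_enat_def numeral_eq_enat)
    then show ?thesis
      using mmd_closed_adj_iff[OF P adj] no_condition_if_closed_adj_modprod[OF G H in_V adj]
      by blast
  next
    case d2
    then have "\<not> closed_adj ?V ?E (g, h) (g', h')"
      using gdist_le_1_iff[OF P, of "(g, h)" "(g', h')"] by (simp add: one_enat_def numeral_eq_enat)
    moreover have "(g', h') \<in> closed_nbhd ?V ?E (g', h')" using v by (simp add: mem_closed_nbhd_iff)
    ultimately have "closed_nbhd ?V ?E (g, h) \<noteq> closed_nbhd ?V ?E (g', h')"
      using mem_closed_nbhd_iff[OF u] by auto
    then show ?thesis using mmd_modprod_gdist_2_iff[OF G H diam in_V d2] d2 by auto
  next
    case d3
    then have "(g, h) \<noteq> (g', h')" using gdist_eq_0_iff[OF u, of ?E "(g', h')"] by auto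
    then show ?thesis
      using mmd_if_gdist_eq_gdiam[OF P _ u v, of 3] d3 diam by (simp add: numeral_eq_enat)
  qed
qed

theorem mainTheorem6:
  fixes VG :: "'a set" and EG :: "'a \<Rightarrow> 'a \<Rightarrow> bool"
    and VH :: "'b set" and EH :: "'b \<Rightarrow> 'b \<Rightarrow> bool"
  assumes G: "simple_graph VG EG" and H: "simple_graph VH EH"
    and Gnc: "\<not> complete_graph VG EG" and Hnc: "\<not> complete_graph VH EH"
    and not_both: "\<not> (two_cliques VG EG \<and> two_cliques VH EH)"
    and diam3: "gdiam (modprod_V VG VH) (modprod_E VG EG VH EH) = 3"
    and u: "(g, h) \<in> modprod_V VG VH" and v: "(g', h') \<in> modprod_V VG VH"
  shows "SR_edge (modprod_V VG VH) (modprod_E VG EG VH EH) (g, h) (g', h') \<longleftrightarrow>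
    ( ((g, h) \<noteq> (g', h') \<and>
        closed_nbhd (modprod_V VG VH) (modprod_E VG EG VH EH) (g, h)
          = closed_nbhd (modprod_V VG VH) (modprod_E VG EG VH EH) (g', h'))
    \<or> (gdist (modprod_V VG VH) (modprod_E VG EG VH EH) (g, h) (g', h') = 2 \<and>
        \<not> boundary_vertex (modprod_V VG VH) (modprod_E VG EG VH EH) (g, h) \<and>
        \<not> boundary_vertex (modprod_V VG VH) (modprod_E VG EG VH EH) (g', h'))
    \<or> gdist (modprod_V VG VH) (modprod_E VG EG VH EH) (g, h) (g', h') = 3
    \<or> (universal VG EG g \<and> universal VG EG g' \<and> gdist VH EH h h' = 2 \<and> SR_edge VH EH h h')
    \<or> (universal VH EH h \<and> universal VH EH h' \<and> gdist VG EG g g' = 2 \<and> SR_edge VG EG g g')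
    \<or> (universal VG EG g \<and> \<not> universal VG EG g' \<and> gdist VH EH h h' = 2 \<and>
        (\<forall>h''\<in>closed_nbhd VH EH h'. gdist VH EH h h'' \<le> 2) \<and>
        \<not> (\<exists>x. gamma_pair VH EH h' x \<or> gamma_pair VH EH x h'))
    \<or> (universal VH EH h \<and> \<not> universal VH EH h' \<and> gdist VG EG g g' = 2 \<and>
        (\<forall>g''\<in>closed_nbhd VG EG g'. gdist VG EG g g'' \<le> 2) \<and>
        \<not> (\<exists>x. gamma_pair VG EG g' x \<or> gamma_pair VG EG x g'))
    \<or> (universal VG EG g' \<and> \<not> universal VG EG g \<and> gdist VH EH h' h = 2 \<and>
        (\<forall>h''\<in>closed_nbhd VH EH h. gdist VH EH h' h'' \<le> 2) \<and>
        \<not> (\<exists>x. gamma_pair VH EH h x \<or> gamma_pair VH EH x h))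
    \<or> (universal VH EH h' \<and> \<not> universal VH EH h \<and> gdist VG EG g' g = 2 \<and>
        (\<forall>g''\<in>closed_nbhd VG EG g. gdist VG EG g' g'' \<le> 2) \<and>
        \<not> (\<exists>x. gamma_pair VG EG g x \<or> gamma_pair VG EG x g)))"
  using mmd_modprod_iff[OF G H diam3 u v] unfolding condition_iv_def condition_v_def .

end
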